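(* Let $m\in\{2,3,\dots\}\cup\{\infty\}$, $\gamma\in(0,1)$, and let $T_n$ be uniformly distributed on $\mathsf{T}^{(m)}_n$. Let $A^\gamma_n$ be the set of trees $t\in\mathsf{T}^{(m)}_n$ having at least one vertex $v$ such that at least two of the subtrees rooted at children of $v$ are equal (as unordered rooted trees) and have at least $n^\gamma$ vertices. Then $\mathbb{P}(T_n\in A^\gamma_n)=O(\rho_m^{-n^\gamma}n^{5/2})$ as $n\to\infty$.
   Context: $\mathsf{T}^{(m)}_n$ is the set of rooted unordered trees with $n$ vertices in which every vertex has at most $m$ children. By Otter's theorem, $\#\mathsf{T}^{(m)}_n\sim\kappa_m\rho_m^nn^{-3/2}$ for constants $\kappa_m>0$, $\rho_m>1$. *)

theory Defs
  imports Complex_Main "HOL-Library.Multiset" "HOL-Library.Extended_Nat" "HOL-Library.Landau_Symbols"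
begin

text \<open>Rooted unordered trees: a vertex is given by the multiset of the subtrees
rooted at its children. Equality of values is equality as unordered rooted trees.\<close>
datatype utree = Node "utree multiset"

primrec nverts :: "utree \<Rightarrow> nat" where
  "nverts (Node M) = Suc (sum_mset (image_mset nverts M))"

primrec outdeg_le :: "enat \<Rightarrow> utree \<Rightarrow> bool" where
  "outdeg_le m (Node M) = (enat (size M) \<le> m \<and> (\<forall>b \<in># image_mset (outdeg_le m) M. b))"

primrec subtrees :: "utree \<Rightarrow> utree set" where
  "subtrees (Node M) = insert (Node M) (\<Union> (set_mset (image_mset subtrees M)))"

definition trees :: "enat \<Rightarrow> nat \<Rightarrow> utree set" where
  "trees m n = {t. outdeg_le m t \<and> nverts t = n}"

definition twin_branch :: "real \<Rightarrow> nat \<Rightarrow> utree \<Rightarrow> bool" where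
  "twin_branch \<gamma> n t = (\<exists>M s. Node M \<in> subtrees t \<and> count M s \<ge> 2 \<and> real (nverts s) \<ge> real n powr \<gamma>)"

definition A_set :: "enat \<Rightarrow> real \<Rightarrow> nat \<Rightarrow> utree set" where
  "A_set m \<gamma> n = {t \<in> trees m n. twin_branch \<gamma> n t}"

end

theory Submission
  imports Defs "HOL-Real_Asymp.Real_Asymp"
begin

text \<open>A tree in \<open>A_set m \<gamma> n\<close> arises from a tree in \<open>trees m (n - 2k)\<close> by attaching two
  copies of some \<open>s \<in> trees m k\<close>, \<open>k \<ge> n powr \<gamma>\<close>, as new children of one of its at most
  \<open>n\<close> vertices. Hence \<open>|A_set m \<gamma> n|\<close> is at most \<open>n\<close> times the sum over such \<open>k\<close> of
  \<open>|trees m k| |trees m (n - 2k)|\<close>. Since \<open>|trees m j| \<le> C \<rho>^j\<close> for all \<open>j\<close>, this sum is at most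
  \<open>C\<^sup>2 \<rho>^n\<close> times a geometric tail \<open>\<Sum>\<^sub>k \<rho>^-k = O(\<rho> powr -(n powr \<gamma>))\<close>; dividing by
  \<open>|trees m n| \<sim> \<kappa> \<rho>^n n powr (-3/2)\<close> gives the bound.\<close>

inductive twin_graft :: "utree \<Rightarrow> utree \<Rightarrow> utree \<Rightarrow> bool" for s where
  twin_graft_root: "twin_graft s (Node M) (Node (M + {#s, s#}))"
| twin_graft_child:
    "c \<in># M \<Longrightarrow> twin_graft s c c' \<Longrightarrow> twin_graft s (Node M) (Node (M - {#c#} + {#c'#}))"

lemma twin_grafts_Node:
  "{t. twin_graft s (Node M) t} =
     insert (Node (M + {#s, s#}))
       (\<Union>c\<in>set_mset M. (\<lambda>c'. Node (M - {#c#} + {#c'#})) ` {c'. twin_graft s c c'})"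
proof (intro set_eqI iffI)
  fix t
  assume "t \<in> {t. twin_graft s (Node M) t}"
  then have "twin_graft s (Node M) t" by simp
  then show "t \<in> insert (Node (M + {#s, s#}))
      (\<Union>c\<in>set_mset M. (\<lambda>c'. Node (M - {#c#} + {#c'#})) ` {c'. twin_graft s c c'})"
    by (cases rule: twin_graft.cases) auto
qed (auto intro: twin_graft_root[of s M, simplified] twin_graft_child[simplified])

lemma sum_set_mset_le_sum_mset:
  fixes f :: "'a \<Rightarrow> nat"
  shows "(\<Sum>x\<in>set_mset M. f x) \<le> (\<Sum>x\<in>#M. f x)"
proof (induction M)
  case (add x M)
  have "(\<Sum>x\<in>set_mset (add_mset x M). f x) \<le> f x + (\<Sum>x\<in>set_mset M. f x)"
    by (simp add: sum.insert_if)
  with add show ?case by simp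
qed simp

lemma twin_grafts_finite_card_le:
  "finite {t'. twin_graft s t t'} \<and> card {t'. twin_graft s t t'} \<le> nverts t"
proof (induction t)
  case (Node M)
  let ?U = "\<Union>c\<in>set_mset M. (\<lambda>c'. Node (M - {#c#} + {#c'#})) ` {c'. twin_graft s c c'}"
  have fin: "finite ?U" using Node by auto
  have "card ?U \<le> (\<Sum>c\<in>set_mset M. card ((\<lambda>c'. Node (M - {#c#} + {#c'#})) ` {c'. twin_graft s c c'}))"
    by (rule card_UN_le) simp
  also have "\<dots> \<le> (\<Sum>c\<in>set_mset M. nverts c)"
    using Node by (intro sum_mono) (meson card_image_le le_trans)
  also have "\<dots> \<le> (\<Sum>c\<in>#M. nverts c)"
    by (rule sum_set_mset_le_sum_mset)
  finally have "card ?U \<le> (\<Sum>c\<in>#M. nverts c)" .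
  moreover have "card (insert (Node (M + {#s, s#})) ?U) \<le> Suc (card ?U)"
    using fin by (simp add: card_insert_if)
  ultimately show ?case
    unfolding twin_grafts_Node using fin by simp
qed

lemma nverts_ge_1: "nverts t \<ge> 1"
  by (cases t) auto

lemma outdeg_le_subtrees: "outdeg_le m t \<Longrightarrow> u \<in> subtrees t \<Longrightarrow> outdeg_le m u"
  by (induction t) auto

lemma twin_graft_decompose:
  assumes "Node M \<in> subtrees t" "count M s \<ge> 2"
  shows "\<exists>t'. twin_graft s t' t \<and> nverts t' + 2 * nverts s = nverts t
           \<and> (outdeg_le m t \<longrightarrow> outdeg_le m t')"
  using assms
proof (induction t)
  case (Node N)
  show ?case
  proof (cases "M = N")
    case True
    have N_eq: "N - {#s, s#} + {#s, s#} = N"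
      using Node.prems(2) True by (intro subset_mset.diff_add) (auto simp: subseteq_mset_def)
    let ?t = "Node (N - {#s, s#})"
    have "twin_graft s ?t (Node N)"
      using twin_graft_root[of s "N - {#s, s#}"] N_eq by simp
    moreover have "nverts ?t + 2 * nverts s = nverts (Node N)"
      by (subst (2) N_eq[symmetric]) simp
    moreover have "outdeg_le m (Node N) \<longrightarrow> outdeg_le m ?t"
      using size_mset_mono[OF diff_subset_eq_self[of N "{#s, s#}"]]
        order_trans[of "enat (size (N - {#s, s#}))" "enat (size N)" m]
      by (auto dest: in_diffD)
    ultimately show ?thesis by blast
  next
    case False
    then obtain c where c: "c \<in># N" "Node M \<in> subtrees c"
      using Node.prems by auto
    from Node.IH[OF c Node.prems(2)] obtain c' where c':
      "twin_graft s c' c" "nverts c' + 2 * nverts s = nverts c" "outdeg_le m c \<longrightarrow> outdeg_le m c'"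
      by blast
    have N_eq: "N = add_mset c (N - {#c#})"
      using c(1) by simp
    let ?t = "Node (N - {#c#} + {#c'#})"
    have "twin_graft s ?t (Node (N - {#c#} + {#c'#} - {#c'#} + {#c#}))"
      by (rule twin_graft_child) (auto simp: c')
    then have "twin_graft s ?t (Node N)"
      using c(1) by simp
    moreover have "nverts ?t + 2 * nverts s = nverts (Node N)"
      using c'(2) by (subst (2) N_eq) simp
    moreover have "size (N - {#c#} + {#c'#}) = size N"
      by (subst (2) N_eq) simp
    then have "outdeg_le m (Node N) \<longrightarrow> outdeg_le m ?t"
      using c c'(3) by (auto dest: in_diffD)
    ultimately show ?thesis by blast
  qed
qed

lemma size_le_sum_nverts: "size M \<le> (\<Sum>t\<in>#M. nverts t)"
proof (induction M)
  case (add x M)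
  then show ?case using nverts_ge_1[of x] by simp
qed simp

lemma finite_nverts_le: "finite {t. nverts t \<le> n}"
proof (induction n)
  case 0
  have "{t. nverts t \<le> 0} = {}"
    using nverts_ge_1 not_one_le_zero le_trans by blast
  then show ?case by (simp only: finite.emptyI)
next
  case (Suc n)
  have "{t. nverts t \<le> Suc n} \<subseteq> Node ` (\<Union>k\<le>n. multisets_of_size {t. nverts t \<le> n} k)"
  proof
    fix t
    assume "t \<in> {t. nverts t \<le> Suc n}"
    then obtain M where t: "t = Node M" "(\<Sum>c\<in>#M. nverts c) \<le> n"
      by (cases t) auto
    have "set_mset M \<subseteq> {t. nverts t \<le> n}"
      using t(2) by (auto dest!: multi_member_split)
    moreover have "size M \<le> n"
      using size_le_sum_nverts[of M] t(2) by simp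
    ultimately show "t \<in> Node ` (\<Union>k\<le>n. multisets_of_size {t. nverts t \<le> n} k)"
      using t(1) by (auto simp: multisets_of_size_def)
  qed
  moreover have "finite (Node ` (\<Union>k\<le>n. multisets_of_size {t. nverts t \<le> n} k))"
    using Suc by auto
  ultimately show ?case
    by (rule finite_subset)
qed

lemma finite_trees: "finite (trees m n)"
  unfolding trees_def by (rule finite_subset[OF _ finite_nverts_le[of n]]) auto

lemma card_UN_le_mult:
  assumes "finite I" "\<And>i. i \<in> I \<Longrightarrow> card (A i) \<le> c"
  shows "card (\<Union>i\<in>I. A i) \<le> card I * c"
  using card_UN_le[OF assms(1), of A] sum_bounded_above[of I "\<lambda>i. card (A i)" c] assms(2)
  by simp

definition twin_sizes :: "real \<Rightarrow> nat \<Rightarrow> nat set" where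
  "twin_sizes \<gamma> n = {k. real n powr \<gamma> \<le> real k \<and> 2 * k \<le> n}"

lemma finite_twin_sizes: "finite (twin_sizes \<gamma> n)"
  unfolding twin_sizes_def by (rule finite_subset[of _ "{..n}"]) auto

lemma A_set_subset_twin_grafts:
  "A_set m \<gamma> n \<subseteq>
     (\<Union>k\<in>twin_sizes \<gamma> n. \<Union>s\<in>trees m k. \<Union>t\<in>trees m (n - 2 * k). {t'. twin_graft s t t'})"
proof
  fix t'
  assume "t' \<in> A_set m \<gamma> n"
  then have t': "outdeg_le m t'" "nverts t' = n" "twin_branch \<gamma> n t'"
    unfolding A_set_def trees_def by auto
  then obtain M s where Ms: "Node M \<in> subtrees t'" "count M s \<ge> 2" "real (nverts s) \<ge> real n powr \<gamma>"
    unfolding twin_branch_def by blast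
  from twin_graft_decompose[OF Ms(1,2), of m] obtain t where
    t: "twin_graft s t t'" "nverts t + 2 * nverts s = nverts t'" "outdeg_le m t' \<longrightarrow> outdeg_le m t"
    by blast
  have "s \<in># M"
    using Ms(2) by (simp add: count_inI)
  then have "outdeg_le m s"
    using outdeg_le_subtrees[OF t'(1) Ms(1)] by simp
  then have "s \<in> trees m (nverts s)"
    unfolding trees_def by simp
  moreover have "t \<in> trees m (n - 2 * nverts s)"
    using t t' unfolding trees_def by auto
  moreover have "nverts s \<in> twin_sizes \<gamma> n"
    unfolding twin_sizes_def using t(2) t'(2) Ms(3) by auto
  ultimately show "t' \<in> (\<Union>k\<in>twin_sizes \<gamma> n. \<Union>s\<in>trees m k. \<Union>t\<in>trees m (n - 2 * k). {t'. twin_graft s t t'})"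
    using t(1) by blast
qed

lemma card_A_set_le:
  "card (A_set m \<gamma> n) \<le> (\<Sum>k\<in>twin_sizes \<gamma> n. card (trees m k) * card (trees m (n - 2 * k)) * n)"
proof -
  have grafts_le: "card {t'. twin_graft s t t'} \<le> n" if "t \<in> trees m (n - 2 * k)" for s t k
    using that twin_grafts_finite_card_le[of s t] unfolding trees_def
    by simp (meson diff_le_self le_trans)
  have "card (A_set m \<gamma> n)
      \<le> card (\<Union>k\<in>twin_sizes \<gamma> n. \<Union>s\<in>trees m k. \<Union>t\<in>trees m (n - 2 * k). {t'. twin_graft s t t'})"
    by (intro card_mono A_set_subset_twin_grafts finite_UN_I finite_twin_sizes finite_trees)
       (simp add: twin_grafts_finite_card_le)
  also have "\<dots> \<le> (\<Sum>k\<in>twin_sizes \<gamma> n.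
      card (\<Union>s\<in>trees m k. \<Union>t\<in>trees m (n - 2 * k). {t'. twin_graft s t t'}))"
    by (rule card_UN_le[OF finite_twin_sizes])
  also have "\<dots> \<le> (\<Sum>k\<in>twin_sizes \<gamma> n. card (trees m k) * (card (trees m (n - 2 * k)) * n))"
    by (intro sum_mono card_UN_le_mult finite_trees grafts_le)
  finally show ?thesis
    by (simp add: mult.assoc)
qed

lemma sum_power_le_geometric_tail:
  fixes r :: real
  assumes r: "0 \<le> r" "r < 1" and K: "finite K" "\<And>k. k \<in> K \<Longrightarrow> k0 \<le> k"
  shows "(\<Sum>k\<in>K. r ^ k) \<le> r ^ k0 / (1 - r)"
proof -
  have inj: "inj_on (\<lambda>k. k - k0) K"
    using K(2) by (intro inj_onI) (metis le_add_diff_inverse)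
  have "(\<Sum>k\<in>K. r ^ k) = (\<Sum>j\<in>(\<lambda>k. k - k0) ` K. r ^ (j + k0))"
    by (subst sum.reindex[OF inj]) (auto intro!: sum.cong simp: K(2))
  also have "\<dots> \<le> (\<Sum>j. r ^ (j + k0))"
    using K r summable_geometric[of r]
    by (intro sum_le_suminf) (auto simp: power_add summable_mult2)
  also have "\<dots> = r ^ k0 / (1 - r)"
    using r by (simp add: power_add suminf_mult2[symmetric] summable_geometric suminf_geometric)
  finally show ?thesis .
qed

lemma card_A_set_le_exponential:
  fixes C \<rho> :: real
  assumes trees_le: "\<And>j. real (card (trees m j)) \<le> C * \<rho> ^ j" and "\<rho> > 1"
  shows "real (card (A_set m \<gamma> n)) \<le> C\<^sup>2 * \<rho> / (\<rho> - 1) * (real n * \<rho> ^ n * \<rho> powr (- (real n powr \<gamma>)))"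
proof -
  define K where "K = twin_sizes \<gamma> n"
  define k0 where "k0 = nat \<lceil>real n powr \<gamma>\<rceil>"
  have "C \<ge> 0"
    using trees_le[of 0] by (simp add: order_trans)
  have "real (card (A_set m \<gamma> n))
      \<le> (\<Sum>k\<in>K. real (card (trees m k)) * real (card (trees m (n - 2 * k))) * real n)"
    using card_A_set_le[of m \<gamma> n] unfolding K_def by (simp flip: of_nat_mult of_nat_sum)
  also have "\<dots> \<le> (\<Sum>k\<in>K. (C * \<rho> ^ k) * (C * \<rho> ^ (n - 2 * k)) * real n)"
    using \<open>C \<ge> 0\<close> \<open>\<rho> > 1\<close> by (intro sum_mono mult_right_mono mult_mono trees_le) auto
  also have "\<dots> = C\<^sup>2 * real n * \<rho> ^ n * (\<Sum>k\<in>K. (1 / \<rho>) ^ k)"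
  proof -
    have "\<rho> ^ n = \<rho> ^ (n - 2 * k) * \<rho> ^ k * \<rho> ^ k" if "k \<in> K" for k
      using that unfolding K_def twin_sizes_def
      by (simp flip: power_add)
    then show ?thesis
      using \<open>\<rho> > 1\<close> by (auto simp: sum_distrib_left power_one_over field_simps power2_eq_square
          intro!: sum.cong)
  qed
  also have "\<dots> \<le> C\<^sup>2 * real n * \<rho> ^ n * (\<rho> powr (- (real n powr \<gamma>)) * (\<rho> / (\<rho> - 1)))"
  proof (intro mult_left_mono)
    have "(\<Sum>k\<in>K. (1 / \<rho>) ^ k) \<le> (1 / \<rho>) ^ k0 / (1 - 1 / \<rho>)"
      using \<open>\<rho> > 1\<close> finite_twin_sizes
      by (intro sum_power_le_geometric_tail) (auto simp: K_def k0_def twin_sizes_def nat_le_iff ceiling_le)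
    also have "\<dots> = \<rho> powr (- real k0) * (\<rho> / (\<rho> - 1))"
      using \<open>\<rho> > 1\<close> by (simp add: powr_minus powr_realpow power_one_over field_simps)
    also have "\<dots> \<le> \<rho> powr (- (real n powr \<gamma>)) * (\<rho> / (\<rho> - 1))"
      unfolding k0_def using \<open>\<rho> > 1\<close>
      by (intro mult_right_mono powr_mono) (auto simp: real_nat_ceiling_ge)
    finally show "(\<Sum>k\<in>K. (1 / \<rho>) ^ k) \<le> \<rho> powr (- (real n powr \<gamma>)) * (\<rho> / (\<rho> - 1))" .
  qed (use \<open>\<rho> > 1\<close> in simp)
  finally show ?thesis
    by (simp add: field_simps)
qed

lemma bigo_imp_le_const_mult:
  fixes f g :: "nat \<Rightarrow> real"
  assumes "f \<in> O(g)" "\<And>n. g n > 0"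
  obtains C where "\<And>n. f n \<le> C * g n"
proof -
  obtain c N where "c > 0" and c: "\<And>n. n \<ge> N \<Longrightarrow> \<bar>f n\<bar> \<le> c * g n"
    using assms by (elim landau_o.bigE) (auto simp: eventually_at_top_linorder less_imp_le)
  define C where "C = c + (\<Sum>i<N. \<bar>f i\<bar> / g i)"
  have "f n \<le> C * g n" for n
  proof (cases "n \<ge> N")
    case True
    have "c \<le> C"
      unfolding C_def using assms(2) by (auto intro!: sum_nonneg divide_nonneg_pos)
    then have "c * g n \<le> C * g n"
      using assms(2)[of n] by (intro mult_right_mono) auto
    then show ?thesis
      using c[OF True] abs_ge_self[of "f n"] by linarith
  next
    case False
    have "\<bar>f n\<bar> / g n \<le> (\<Sum>i<N. \<bar>f i\<bar> / g i)"
      using False assms(2) by (intro member_le_sum divide_nonneg_pos) auto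
    also have "\<dots> \<le> C"
      unfolding C_def using \<open>c > 0\<close> by simp
    finally show ?thesis
      using assms(2)[of n] by (simp add: divide_le_eq)
  qed
  then show thesis by (rule that)
qed

lemma bigo_divide_asymp_equiv:
  fixes f b T g :: "'a \<Rightarrow> 'b :: real_normed_field"
  assumes "f \<in> O[F](b)" "T \<sim>[F] g" "eventually (\<lambda>x. g x \<noteq> 0) F"
  shows "(\<lambda>x. f x / T x) \<in> O[F](\<lambda>x. b x / g x)"
proof (rule landau_o.big.divide)
  show "eventually (\<lambda>x. T x \<noteq> 0) F"
    using asymp_equiv_eventually_zeros[OF assms(2)] assms(3) by eventually_elim simp
  show "g \<in> O[F](T)"
    using asymp_equiv_imp_bigo[OF asymp_equiv_symI[OF assms(2)]] .
qed (use assms in auto)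

lemma exponential_ratio_bigo:
  fixes \<kappa> \<rho> \<gamma> :: real
  assumes "\<kappa> > 0" "\<rho> > 0"
  shows "(\<lambda>n. (real n * \<rho> ^ n * \<rho> powr (- (real n powr \<gamma>))) / (\<kappa> * \<rho> ^ n * real n powr (-3/2)))
           \<in> O(\<lambda>n. \<rho> powr (- (real n powr \<gamma>)) * real n powr (5/2))"
proof (intro bigoI[where c = "1 / \<kappa>"] eventually_mono[OF eventually_gt_at_top[of 0]])
  fix n :: nat
  assume "n > 0"
  then have "real n powr (5/2) * real n powr (-3/2) = real n"
    by (simp flip: powr_add)
  then show "norm ((real n * \<rho> ^ n * \<rho> powr (- (real n powr \<gamma>))) / (\<kappa> * \<rho> ^ n * real n powr (-3/2)))
      \<le> 1 / \<kappa> * norm (\<rho> powr (- (real n powr \<gamma>)) * real n powr (5/2))"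
    using \<open>n > 0\<close> assms by (simp add: field_simps)
qed

theorem lemma24:
  fixes m :: enat and \<gamma> \<kappa> \<rho> :: real
  assumes "m \<ge> 2" and "0 < \<gamma>" and "\<gamma> < 1"
    and "\<kappa> > 0" and "\<rho> > 1"
    and "(\<lambda>n. real (card (trees m n))) \<sim>[at_top] (\<lambda>n. \<kappa> * \<rho> ^ n * real n powr (-3/2))"
  shows "(\<lambda>n. real (card (A_set m \<gamma> n)) / real (card (trees m n)))
           \<in> O[at_top](\<lambda>n. \<rho> powr (- (real n powr \<gamma>)) * real n powr (5/2))"
proof -
  define T where "T n = real (card (trees m n))" for n
  define g where "g n = \<kappa> * \<rho> ^ n * real n powr (-3/2)" for n :: nat
  define b where "b n = real n * \<rho> ^ n * \<rho> powr (- (real n powr \<gamma>))" for n :: nat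
  have T_g: "T \<sim>[at_top] g"
    using assms(6) unfolding T_def g_def .
  have "g \<in> O(\<lambda>n. \<rho> ^ n)"
    unfolding g_def using \<open>\<rho> > 1\<close> by real_asymp
  then have "T \<in> O(\<lambda>n. \<rho> ^ n)"
    using asymp_equiv_imp_bigo[OF T_g] by (rule landau_o.big_trans[rotated])
  then obtain C where "\<And>j. T j \<le> C * \<rho> ^ j"
    by (rule bigo_imp_le_const_mult) (use \<open>\<rho> > 1\<close> in auto)
  then have "\<And>n. real (card (A_set m \<gamma> n)) \<le> C\<^sup>2 * \<rho> / (\<rho> - 1) * b n"
    unfolding T_def b_def using \<open>\<rho> > 1\<close> by (intro card_A_set_le_exponential)
  moreover have "b n \<ge> 0" for n
    unfolding b_def using \<open>\<rho> > 1\<close> by simp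
  ultimately have A_bigo: "(\<lambda>n. real (card (A_set m \<gamma> n))) \<in> O(b)"
    by (intro bigoI[where c = "C\<^sup>2 * \<rho> / (\<rho> - 1)"] always_eventually) simp
  have "eventually (\<lambda>n. g n \<noteq> 0) at_top"
    using eventually_gt_at_top[of 0] by eventually_elim (use assms(4,5) in \<open>simp add: g_def\<close>)
  with A_bigo T_g have "(\<lambda>n. real (card (A_set m \<gamma> n)) / T n) \<in> O(\<lambda>n. b n / g n)"
    by (rule bigo_divide_asymp_equiv)
  also have "(\<lambda>n. b n / g n) \<in> O(\<lambda>n. \<rho> powr (- (real n powr \<gamma>)) * real n powr (5/2))"
    unfolding b_def g_def using assms(4,5) by (intro exponential_ratio_bigo) auto
  finally show ?thesis
    unfolding T_def .
qed

end
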